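(* Let $\mathscr{X}$ be a totally bounded normed metric space with $\|x\|\le1$ for all $x$, consider the $\epsilon$-perturbation channel on $\mathscr{X}$ described in the context, let $0<\epsilon\le1$ and $0\le\delta<m_{\mathscr{Y}}(V_\epsilon)$. Then $$C^\delta_\epsilon=\sup\Big\{ I_{\tilde\delta/|[\![X]\!]|}(Y;X)\ :\ \tilde\delta\ge0,\ X\in\mathscr{F}_{\tilde\delta},\ \tilde\delta\le \delta/m_{\mathscr{Y}}([\![Y]\!])\Big\}\ \text{bits},$$ where for each transmitted UV $X$, $Y$ denotes the corresponding received UV.
   Context: Uncertain variables (UVs): a UV is a map $U$ from a sample space $\Omega$ to a set; jointly considered UVs share $\Omega$. $[\![U]\!]=\{U(\omega)\}$; $[\![U|w]\!]=\{U(\omega):W(\omega)=w\}$, $[\![U|W]\!]=\{[\![U|w]\!]:w\in[\![W]\!]\}$. An uncertainty function on a set $\mathscr{U}$ is a map $m$ on subsets of $\mathscr{U}$ with $m(\emptyset)=0$, $0<m(S)<\infty$ for nonempty $S$, $\max\{m(S_1),m(S_2)\}\le m(S_1\cup S_2)$. Association: with uncertainty functions $m_{\mathscr{X}},m_{\mathscr{Y}}$ on the value sets of $X,Y$, $\mathscr{A}(X;Y)=\{m_{\mathscr{X}}([\![X|y_1]\!]\cap[\![X|y_2]\!])/m_{\mathscr{X}}([\![X]\!]):y_1\ne y_2\in[\![Y]\!]\}\setminus\{0\}$, $\mathscr{A}(Y;X)=\{m_{\mathscr{Y}}([\![Y|x_1]\!]\cap[\![Y|x_2]\!])/m_{\mathscr{Y}}([\![Y]\!]):x_1\ne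 x_2\in[\![X]\!]\}\setminus\{0\}$. $\mathscr{A}\succ\delta$: all elements $>\delta$ (false for $\emptyset$); $\mathscr{A}\preceq\delta$: all elements $\le\delta$ (true for $\emptyset$). $(X,Y)\stackrel{d}{\leftrightarrow}(\delta_1,\delta_2)$ iff $\mathscr{A}(X;Y)\succ\delta_1,\mathscr{A}(Y;X)\succ\delta_2$; $(X,Y)\stackrel{a}{\leftrightarrow}(\delta_1,\delta_2)$ iff $\mathscr{A}(X;Y)\preceq\delta_1,\mathscr{A}(Y;X)\preceq\delta_2$. $\delta$-mutual information: for UVs $U$ (values in $\mathscr{U}$ with uncertainty function $m_{\mathscr{U}}$) and $W$, points $u,u'\in[\![U]\!]$ are $\delta$-connected via $[\![U|W]\!]$ if there are $w_1,\dots,w_N\in[\![W]\!]$ with $u\in[\![U|w_1]\!]$, $u'\in[\![U|w_N]\!]$, $m_{\mathscr{U}}([\![U|w_i]\!]\cap[\![U|w_{i-1}]\!])/m_{\mathscr{U}}([\![U]\!])>\delta$ for $1<i\le N$; a set is $\delta$-connected if all pairs of its points are. A $\delta$-overlap family $[\![U|W]\!]^*_\delta$ is a family of distinct subsets covering $[\![U]\!]$, of largest cardinality among covering families such that (i) each member is $\delta$-connected and contains some $[\![U|w]\!]$; (ii) distinct members $S_1,S_2$ satisfy $m_{\mathscr{U}}(S_1\cap S_2)\le\delta\, m_{\mathscr{U}}([\![U]\!])$; (iii) each $[\![U|w]\!]$ lies in some member. $I_\delta(U;W)=\log_2|[\![U|W]\!]^*_\delta|$ if such a family exists, else $0$. Channel: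 the output space is $\mathscr{Y}=\mathscr{X}$; $m_{\mathscr{X}},m_{\mathscr{Y}}$ are uncertainty functions on $\mathscr{X},\mathscr{Y}$ with $m_{\mathscr{Y}}(\mathscr{Y})=1$. $S_\epsilon(x)=\{y\in\mathscr{Y}:\|x-y\|\le\epsilon\}$; $V_\epsilon=S_\epsilon(x^* )$ where $x^*$ minimizes $m_{\mathscr{Y}}(S_\epsilon(x))$ over $x\in\mathscr{X}$. A codebook is a discrete set $\mathcal{C}\subseteq\mathscr{X}$. $e_\epsilon(x_1,x_2)=m_{\mathscr{Y}}(S_\epsilon(x_1)\cap S_\epsilon(x_2))/m_{\mathscr{Y}}(\mathscr{Y})$. $\mathcal{C}$ is $(\epsilon,\delta)$-distinguishable if $e_\epsilon(x_1,x_2)\le\delta/|\mathcal{C}|$ for all distinct $x_1,x_2\in\mathcal{C}$; $C^\delta_\epsilon=\sup\log_2|\mathcal{C}|$ over $(\epsilon,\delta)$-distinguishable codebooks. For a codebook $\mathcal{C}$, the transmitted UV $X$ and received UV $Y$ satisfy $[\![X]\!]=\mathcal{C}$, $[\![Y]\!]=\bigcup_{x\in\mathcal{C}}S_\epsilon(x)$, $[\![Y|x]\!]=\{y\in[\![Y]\!]:\|x-y\|\le\epsilon\}$, $[\![X|y]\!]=\{x\in[\![X]\!]:\|x-y\|\le\epsilon\}$. Feasible set: $\mathscr{F}_\delta$ is the set of transmitted UVs $X$ with $[\![X]\!]\subseteq\mathscr{X}$ a codebook such that either $(X,Y)\stackrel{d}{\leftrightarrow}(0,\delta/|[\![X]\!]|)$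 or $(X,Y)\stackrel{a}{\leftrightarrow}(1,\delta/|[\![X]\!]|)$. *)

theory Defs
  imports "HOL-Analysis.Analysis" "HOL-Library.Extended_Real"
begin

definition uncertainty_function :: "'b set \<Rightarrow> ('b set \<Rightarrow> real) \<Rightarrow> bool" where
  "uncertainty_function A m \<longleftrightarrow>
     m {} = 0 \<and> (\<forall>S. S \<subseteq> A \<and> S \<noteq> {} \<longrightarrow> 0 < m S) \<and>
     (\<forall>S1 S2. S1 \<subseteq> A \<and> S2 \<subseteq> A \<longrightarrow> max (m S1) (m S2) \<le> m (S1 \<union> S2))"

text \<open>Ball of radius eps in the output space Ys = Xs.\<close>
definition S_eps :: "'a::real_normed_vector set \<Rightarrow> real \<Rightarrow> 'a \<Rightarrow> 'a set" where
  "S_eps Xs eps x = {y \<in> Xs. norm (x - y) \<le> eps}"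

text \<open>Codebook: a discrete (here: finite, nonempty) subset of Xs.\<close>
definition codebook :: "'a set \<Rightarrow> 'a set \<Rightarrow> bool" where
  "codebook Xs C \<longleftrightarrow> C \<subseteq> Xs \<and> finite C \<and> C \<noteq> {}"

definition distinguishable ::
  "('a::real_normed_vector set \<Rightarrow> real) \<Rightarrow> 'a set \<Rightarrow> real \<Rightarrow> real \<Rightarrow> 'a set \<Rightarrow> bool" where
  "distinguishable mY Xs eps delta C \<longleftrightarrow> codebook Xs C \<and>
     (\<forall>x1\<in>C. \<forall>x2\<in>C. x1 \<noteq> x2 \<longrightarrow>
        mY (S_eps Xs eps x1 \<inter> S_eps Xs eps x2) / mY Xs \<le> delta / real (card C))"

definition capacity ::
  "('a::real_normed_vector set \<Rightarrow> real) \<Rightarrow> 'a set \<Rightarrow> real \<Rightarrow> real \<Rightarrow> ereal" where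
  "capacity mY Xs eps delta =
     Sup {ereal (log 2 (real (card C))) | C. distinguishable mY Xs eps delta C}"

text \<open>Ranges of transmitted/received UVs for codebook C.\<close>
definition outY :: "'a::real_normed_vector set \<Rightarrow> real \<Rightarrow> 'a set \<Rightarrow> 'a set" where
  "outY Xs eps C = (\<Union>x\<in>C. S_eps Xs eps x)"

definition condY :: "'a::real_normed_vector set \<Rightarrow> real \<Rightarrow> 'a set \<Rightarrow> 'a \<Rightarrow> 'a set" where
  "condY Xs eps C x = {y \<in> outY Xs eps C. norm (x - y) \<le> eps}"

definition condX :: "real \<Rightarrow> 'a::real_normed_vector set \<Rightarrow> 'a \<Rightarrow> 'a set" where
  "condX eps C y = {x \<in> C. norm (x - y) \<le> eps}"

definition assocXY ::
  "('a::real_normed_vector set \<Rightarrow> real) \<Rightarrow> 'a set \<Rightarrow> real \<Rightarrow> 'a set \<Rightarrow> real set" where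
  "assocXY mX Xs eps C =
     {mX (condX eps C y1 \<inter> condX eps C y2) / mX C | y1 y2.
        y1 \<in> outY Xs eps C \<and> y2 \<in> outY Xs eps C \<and> y1 \<noteq> y2} - {0}"

definition assocYX ::
  "('a::real_normed_vector set \<Rightarrow> real) \<Rightarrow> 'a set \<Rightarrow> real \<Rightarrow> 'a set \<Rightarrow> real set" where
  "assocYX mY Xs eps C =
     {mY (condY Xs eps C x1 \<inter> condY Xs eps C x2) / mY (outY Xs eps C) | x1 x2.
        x1 \<in> C \<and> x2 \<in> C \<and> x1 \<noteq> x2} - {0}"

definition succ_set :: "real set \<Rightarrow> real \<Rightarrow> bool" where
  "succ_set A d \<longleftrightarrow> A \<noteq> {} \<and> (\<forall>a\<in>A. a > d)"

definition preceq_set :: "real set \<Rightarrow> real \<Rightarrow> bool" where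
  "preceq_set A d \<longleftrightarrow> (\<forall>a\<in>A. a \<le> d)"

text \<open>Membership of the transmitted UV with range C in the feasible set F_delta.\<close>
definition feasible ::
  "('a::real_normed_vector set \<Rightarrow> real) \<Rightarrow> ('a set \<Rightarrow> real) \<Rightarrow> 'a set \<Rightarrow> real \<Rightarrow> real \<Rightarrow> 'a set \<Rightarrow> bool" where
  "feasible mX mY Xs eps delta C \<longleftrightarrow> codebook Xs C \<and>
     ((succ_set (assocXY mX Xs eps C) 0 \<and> succ_set (assocYX mY Xs eps C) (delta / real (card C))) \<or>
      (preceq_set (assocXY mX Xs eps C) 1 \<and> preceq_set (assocYX mY Xs eps C) (delta / real (card C))))"

text \<open>delta-mutual information I_delta(U;W), given the uncertainty function m on values of U,
  the range U0 = [U], the range W of W and the conditional ranges cond w = [U|w].\<close>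
definition delta_connected ::
  "('b set \<Rightarrow> real) \<Rightarrow> 'b set \<Rightarrow> 'w set \<Rightarrow> ('w \<Rightarrow> 'b set) \<Rightarrow> real \<Rightarrow> 'b \<Rightarrow> 'b \<Rightarrow> bool" where
  "delta_connected m U0 W cond delta u u' \<longleftrightarrow>
     (\<exists>ws. ws \<noteq> [] \<and> set ws \<subseteq> W \<and> u \<in> cond (hd ws) \<and> u' \<in> cond (last ws) \<and>
        (\<forall>i. 0 < i \<and> i < length ws \<longrightarrow>
           m (cond (ws ! i) \<inter> cond (ws ! (i - 1))) / m U0 > delta))"

definition delta_connected_set ::
  "('b set \<Rightarrow> real) \<Rightarrow> 'b set \<Rightarrow> 'w set \<Rightarrow> ('w \<Rightarrow> 'b set) \<Rightarrow> real \<Rightarrow> 'b set \<Rightarrow> bool" where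
  "delta_connected_set m U0 W cond delta S \<longleftrightarrow>
     (\<forall>u\<in>S. \<forall>u'\<in>S. delta_connected m U0 W cond delta u u')"

definition valid_overlap_family ::
  "('b set \<Rightarrow> real) \<Rightarrow> 'b set \<Rightarrow> 'w set \<Rightarrow> ('w \<Rightarrow> 'b set) \<Rightarrow> real \<Rightarrow> 'b set set \<Rightarrow> bool" where
  "valid_overlap_family m U0 W cond delta F \<longleftrightarrow>
     (\<forall>S\<in>F. S \<subseteq> U0) \<and> U0 \<subseteq> \<Union>F \<and>
     (\<forall>S\<in>F. delta_connected_set m U0 W cond delta S \<and> (\<exists>w\<in>W. cond w \<subseteq> S)) \<and>
     (\<forall>S1\<in>F. \<forall>S2\<in>F. S1 \<noteq> S2 \<longrightarrow> m (S1 \<inter> S2) \<le> delta * m U0) \<and>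
     (\<forall>w\<in>W. \<exists>S\<in>F. cond w \<subseteq> S)"

definition overlap_family ::
  "('b set \<Rightarrow> real) \<Rightarrow> 'b set \<Rightarrow> 'w set \<Rightarrow> ('w \<Rightarrow> 'b set) \<Rightarrow> real \<Rightarrow> 'b set set \<Rightarrow> bool" where
  "overlap_family m U0 W cond delta F \<longleftrightarrow>
     valid_overlap_family m U0 W cond delta F \<and> finite F \<and>
     (\<forall>G. valid_overlap_family m U0 W cond delta G \<longrightarrow> finite G \<and> card G \<le> card F)"

definition I_delta ::
  "('b set \<Rightarrow> real) \<Rightarrow> 'b set \<Rightarrow> 'w set \<Rightarrow> ('w \<Rightarrow> 'b set) \<Rightarrow> real \<Rightarrow> real" where
  "I_delta m U0 W cond delta =
     (if \<exists>F. overlap_family m U0 W cond delta F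
      then log 2 (real (card (SOME F. overlap_family m U0 W cond delta F)))
      else 0)"

end

theory Submission
  imports Defs
begin

text \<open>Every ball \<open>S\<^sub>\<epsilon>(x)\<close> has measure at least \<open>m(V\<^sub>\<epsilon>) > \<delta>\<close>, whereas for
  \<open>\<delta>' \<le> \<delta> / m([Y])\<close> two members of a \<open>\<delta>'/|C|\<close>-overlap family of \<open>[Y|X]\<close> meet in measure at
  most \<open>\<delta>/|C| \<le> \<delta>\<close>; so no ball fits into such an intersection. Picking in every member a ball it
  contains therefore injects the family into the codebook, and the chosen centres form an
  \<open>(\<epsilon>,\<delta>)\<close>-distinguishable codebook of the same size, whence \<open>I \<le> C\<^sup>\<delta>\<^sub>\<epsilon>\<close>. Conversely, for a
  distinguishable codebook the balls themselves form a maximal overlap family, and the codebook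
  is feasible for \<open>\<delta>' = \<delta> / m([Y])\<close> through the second alternative of \<open>\<F>\<^bsub>\<delta>'\<^esub>\<close>.\<close>

lemma uncertainty_function_mono:
  assumes "uncertainty_function A m" "S \<subseteq> T" "T \<subseteq> A"
  shows "m S \<le> m T"
  using assms unfolding uncertainty_function_def
  by (metis Un_absorb1 dual_order.trans max.cobounded1)

lemma uncertainty_function_pos:
  assumes "uncertainty_function A m" "S \<subseteq> A" "S \<noteq> {}"
  shows "0 < m S"
  using assms unfolding uncertainty_function_def by blast

lemma valid_overlap_familyD:
  assumes "valid_overlap_family m U W cond d F"
  shows "S \<in> F \<Longrightarrow> S \<subseteq> U"
    and "S \<in> F \<Longrightarrow> \<exists>w\<in>W. cond w \<subseteq> S"
    and "S1 \<in> F \<Longrightarrow> S2 \<in> F \<Longrightarrow> S1 \<noteq> S2 \<Longrightarrow> m (S1 \<inter> S2) \<le> d * m U"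
  using assms unfolding valid_overlap_family_def by auto

lemma valid_overlap_family_representatives:
  assumes m: "uncertainty_function A m" and "U \<subseteq> A"
    and G: "valid_overlap_family m U W cond d G"
    and large: "\<forall>w\<in>W. d * m U < m (cond w)"
  obtains f where "inj_on f G" "f ` G \<subseteq> W" "\<And>S. S \<in> G \<Longrightarrow> cond (f S) \<subseteq> S"
proof -
  have "\<forall>S\<in>G. \<exists>w. w \<in> W \<and> cond w \<subseteq> S"
    using valid_overlap_familyD(2)[OF G] by blast
  then obtain f where f: "\<forall>S\<in>G. f S \<in> W \<and> cond (f S) \<subseteq> S"
    by (rule bchoice[THEN exE])
  have "inj_on f G"
  proof (rule inj_onI, rule ccontr)
    fix S1 S2 assume S: "S1 \<in> G" "S2 \<in> G" "f S1 = f S2" "S1 \<noteq> S2"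
    have "cond (f S1) \<subseteq> S1" "cond (f S2) \<subseteq> S2" using f S(1,2) by blast+
    then have "cond (f S1) \<subseteq> S1 \<inter> S2" using S(3) by simp
    moreover have "S1 \<inter> S2 \<subseteq> A"
      using valid_overlap_familyD(1)[OF G S(1)] \<open>U \<subseteq> A\<close> by blast
    ultimately have "m (cond (f S1)) \<le> m (S1 \<inter> S2)"
      by (rule uncertainty_function_mono[OF m])
    also have "\<dots> \<le> d * m U"
      using valid_overlap_familyD(3)[OF G S(1,2,4)] .
    also have "\<dots> < m (cond (f S1))"
      using large f S(1) by blast
    finally show False by simp
  qed
  then show thesis
    by (rule that) (use f in auto)
qed

lemma valid_overlap_family_card_le:
  assumes "uncertainty_function A m" "U \<subseteq> A" "valid_overlap_family m U W cond d G"
    and "\<forall>w\<in>W. d * m U < m (cond w)" and "finite W"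
  shows "finite G" "card G \<le> card W"
proof -
  obtain f where f: "inj_on f G" "f ` G \<subseteq> W" "\<And>S. S \<in> G \<Longrightarrow> cond (f S) \<subseteq> S"
    by (metis valid_overlap_family_representatives[OF assms(1-4)])
  show "finite G"
    using finite_imageD[OF finite_subset[OF f(2) \<open>finite W\<close>] f(1)] .
  show "card G \<le> card W"
    using card_inj_on_le[OF f(1,2) \<open>finite W\<close>] .
qed

lemma overlap_family_card_eq:
  assumes "overlap_family m U W cond d F" "overlap_family m U W cond d F'"
  shows "card F = card F'"
proof -
  have "valid_overlap_family m U W cond d F" "valid_overlap_family m U W cond d F'"
    and "\<forall>G. valid_overlap_family m U W cond d G \<longrightarrow> card G \<le> card F"
    and "\<forall>G. valid_overlap_family m U W cond d G \<longrightarrow> card G \<le> card F'"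
    using assms unfolding overlap_family_def by simp_all
  then show ?thesis by (simp add: le_antisym)
qed

lemma I_delta_overlap_family:
  assumes F: "overlap_family m U W cond d F"
  shows "I_delta m U W cond d = log 2 (card F)"
proof -
  have ex: "\<exists>F. overlap_family m U W cond d F" using F ..
  then have "overlap_family m U W cond d (SOME F. overlap_family m U W cond d F)"
    by (rule someI_ex)
  then show ?thesis
    unfolding I_delta_def using ex overlap_family_card_eq[OF F] by simp
qed

lemma I_delta_cases:
  assumes m: "uncertainty_function A m" and "U \<subseteq> A"
    and large: "\<forall>w\<in>W. d * m U < m (cond w)"
  obtains (zero) "I_delta m U W cond d = 0"
  | (witness) W' where "W' \<subseteq> W" "W' \<noteq> {}" "I_delta m U W cond d = log 2 (card W')"
      "\<And>w1 w2. w1 \<in> W' \<Longrightarrow> w2 \<in> W' \<Longrightarrow> w1 \<noteq> w2 \<Longrightarrow> m (cond w1 \<inter> cond w2) \<le> d * m U"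
proof (cases "\<exists>F. overlap_family m U W cond d F")
  case False
  then have "I_delta m U W cond d = 0" unfolding I_delta_def by auto
  then show thesis by (rule zero)
next
  case True
  then obtain F where F: "overlap_family m U W cond d F" ..
  then have valid: "valid_overlap_family m U W cond d F"
    unfolding overlap_family_def by blast
  obtain f where f: "inj_on f F" "f ` F \<subseteq> W" "\<And>S. S \<in> F \<Longrightarrow> cond (f S) \<subseteq> S"
    by (metis valid_overlap_family_representatives[OF m \<open>U \<subseteq> A\<close> valid large])
  have I: "I_delta m U W cond d = log 2 (card (f ` F))"
    using I_delta_overlap_family[OF F] card_image[OF f(1)] by simp
  show thesis
  proof (cases "F = {}")
    case True
    then show thesis using zero I by (simp add: log_def)
  next
    case False
    show thesis
    proof (rule witness[of "f ` F"])
      fix w1 w2 assume w: "w1 \<in> f ` F" "w2 \<in> f ` F" "w1 \<noteq> w2"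
      obtain S1 S2 where S: "S1 \<in> F" "S2 \<in> F" "w1 = f S1" "w2 = f S2"
        using w(1,2) by blast
      have "cond w1 \<inter> cond w2 \<subseteq> S1 \<inter> S2" using f(3) S by blast
      moreover have "S1 \<inter> S2 \<subseteq> A"
        using valid_overlap_familyD(1)[OF valid S(1)] \<open>U \<subseteq> A\<close> by blast
      ultimately have "m (cond w1 \<inter> cond w2) \<le> m (S1 \<inter> S2)"
        by (rule uncertainty_function_mono[OF m])
      also have "\<dots> \<le> d * m U"
        using valid_overlap_familyD(3)[OF valid S(1,2)] S(3,4) w(3) by blast
      finally show "m (cond w1 \<inter> cond w2) \<le> d * m U" .
    qed (use f(2) False I in auto)
  qed
qed

lemma overlap_family_conditional_ranges:
  assumes m: "uncertainty_function A m" and "U \<subseteq> A" and "finite W"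
    and U: "U = (\<Union>w\<in>W. cond w)"
    and overlap: "\<And>w1 w2. w1 \<in> W \<Longrightarrow> w2 \<in> W \<Longrightarrow> w1 \<noteq> w2 \<Longrightarrow> m (cond w1 \<inter> cond w2) \<le> d * m U"
    and large: "\<forall>w\<in>W. d * m U < m (cond w)"
  shows "overlap_family m U W cond d (cond ` W)" "inj_on cond W"
proof -
  show "inj_on cond W"
  proof (rule inj_onI, rule ccontr)
    fix w1 w2 assume w: "w1 \<in> W" "w2 \<in> W" "cond w1 = cond w2" "w1 \<noteq> w2"
    then have "m (cond w1) \<le> d * m U" using overlap[OF w(1,2,4)] by simp
    then show False using bspec[OF large w(1)] by simp
  qed
  have connected: "delta_connected_set m U W cond d (cond w)" if "w \<in> W" for w
    unfolding delta_connected_set_def delta_connected_def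
    using that by (intro ballI exI[of _ "[w]"]) auto
  have "valid_overlap_family m U W cond d (cond ` W)"
    unfolding valid_overlap_family_def
  proof (intro conjI ballI impI)
    fix S1 S2 assume "S1 \<in> cond ` W" "S2 \<in> cond ` W" "S1 \<noteq> S2"
    then show "m (S1 \<inter> S2) \<le> d * m U" using overlap by blast
  qed (use U connected in auto)
  moreover have "finite G \<and> card G \<le> card (cond ` W)"
    if "valid_overlap_family m U W cond d G" for G
    using valid_overlap_family_card_le[OF m \<open>U \<subseteq> A\<close> that large \<open>finite W\<close>]
      card_image[OF \<open>inj_on cond W\<close>] by simp
  ultimately show "overlap_family m U W cond d (cond ` W)"
    unfolding overlap_family_def using \<open>finite W\<close> by blast
qed

lemma I_delta_conditional_ranges:
  assumes "uncertainty_function A m" and "U \<subseteq> A" and "finite W"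
    and "U = (\<Union>w\<in>W. cond w)"
    and "\<And>w1 w2. w1 \<in> W \<Longrightarrow> w2 \<in> W \<Longrightarrow> w1 \<noteq> w2 \<Longrightarrow> m (cond w1 \<inter> cond w2) \<le> d * m U"
    and "\<forall>w\<in>W. d * m U < m (cond w)"
  shows "I_delta m U W cond d = log 2 (card W)"
  using I_delta_overlap_family[OF overlap_family_conditional_ranges(1)[OF assms]]
    card_image[OF overlap_family_conditional_ranges(2)[OF assms]] by simp

lemma outY_subset: "outY Xs eps C \<subseteq> Xs"
  by (auto simp: outY_def S_eps_def)

lemma condY_eq_S_eps: "x \<in> C \<Longrightarrow> condY Xs eps C x = S_eps Xs eps x"
  by (auto simp: condY_def outY_def S_eps_def)

lemma outY_eq_UN_condY: "outY Xs eps C = (\<Union>x\<in>C. condY Xs eps C x)"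
  by (auto simp: condY_eq_S_eps outY_def)

lemma outY_pos:
  assumes "uncertainty_function Xs mY" "codebook Xs C" "0 \<le> eps"
  shows "0 < mY (outY Xs eps C)"
proof -
  obtain x where "x \<in> C" "x \<in> Xs" using \<open>codebook Xs C\<close> unfolding codebook_def by blast
  moreover have "x \<in> S_eps Xs eps x" using \<open>x \<in> Xs\<close> \<open>0 \<le> eps\<close> by (simp add: S_eps_def)
  ultimately have "x \<in> outY Xs eps C" unfolding outY_def by blast
  then show ?thesis using uncertainty_function_pos[OF assms(1) outY_subset] by blast
qed

lemma ball_measure_above_threshold:
  assumes "codebook Xs C" "0 \<le> delta" "\<forall>x\<in>Xs. delta < mY (S_eps Xs eps x)"
    and "t \<le> delta / card C" "x \<in> C"
  shows "t < mY (condY Xs eps C x)"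
proof -
  have "1 \<le> real (card C)"
    using assms(1) unfolding codebook_def by (simp add: Suc_le_eq card_gt_0_iff)
  then have "delta / card C \<le> delta"
    using divide_left_mono[of 1 "real (card C)" delta] \<open>0 \<le> delta\<close> by simp
  moreover have "delta < mY (S_eps Xs eps x)"
    using assms(1,3,5) unfolding codebook_def by blast
  ultimately show ?thesis using assms(4,5) by (simp add: condY_eq_S_eps)
qed

lemma log_card_le_capacity:
  "distinguishable mY Xs eps delta C \<Longrightarrow> ereal (log 2 (card C)) \<le> capacity mY Xs eps delta"
  unfolding capacity_def by (rule Sup_upper) blast

lemma capacity_nonneg:
  assumes "Xs \<noteq> {}"
  shows "0 \<le> capacity mY Xs eps delta"
proof -
  obtain x where "x \<in> Xs" using assms by blast
  then have "distinguishable mY Xs eps delta {x}"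
    by (simp add: distinguishable_def codebook_def)
  then show ?thesis
    using log_card_le_capacity by (fastforce simp: zero_ereal_def)
qed

lemma distinguishable_subcodebook:
  assumes C: "codebook Xs C" and "C' \<subseteq> C" "C' \<noteq> {}" and "mY Xs = 1" "0 \<le> delta"
    and overlap: "\<And>x1 x2. x1 \<in> C' \<Longrightarrow> x2 \<in> C' \<Longrightarrow> x1 \<noteq> x2 \<Longrightarrow>
      mY (condY Xs eps C x1 \<inter> condY Xs eps C x2) \<le> delta / card C"
  shows "distinguishable mY Xs eps delta C'"
  unfolding distinguishable_def
proof (intro conjI ballI impI)
  have "finite C'" using C \<open>C' \<subseteq> C\<close> unfolding codebook_def by (blast intro: finite_subset)
  then show "codebook Xs C'" using C \<open>C' \<subseteq> C\<close> \<open>C' \<noteq> {}\<close> unfolding codebook_def by blast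
  have "delta / card C \<le> delta / card C'"
    using C \<open>C' \<subseteq> C\<close> \<open>C' \<noteq> {}\<close> \<open>finite C'\<close> \<open>0 \<le> delta\<close> unfolding codebook_def
    by (intro divide_left_mono) (auto simp: card_mono card_gt_0_iff)
  moreover fix x1 x2 assume x: "x1 \<in> C'" "x2 \<in> C'" "x1 \<noteq> x2"
  ultimately show "mY (S_eps Xs eps x1 \<inter> S_eps Xs eps x2) / mY Xs \<le> delta / card C'"
    using overlap[OF x] x \<open>C' \<subseteq> C\<close> \<open>mY Xs = 1\<close> by (simp add: condY_eq_S_eps subsetD)
qed

lemma I_delta_le_capacity:
  assumes mY: "uncertainty_function Xs mY" and "mY Xs = 1" and "0 \<le> delta" and "0 \<le> eps"
    and large: "\<forall>x\<in>Xs. delta < mY (S_eps Xs eps x)"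
    and C: "codebook Xs C" and dt: "dt \<le> delta / mY (outY Xs eps C)"
  shows "ereal (I_delta mY (outY Xs eps C) C (condY Xs eps C) (dt / card C))
           \<le> capacity mY Xs eps delta"
proof -
  let ?U = "outY Xs eps C"
  have "dt * mY ?U \<le> delta"
    using dt outY_pos[OF mY C \<open>0 \<le> eps\<close>] by (simp add: le_divide_eq)
  then have threshold: "dt / card C * mY ?U \<le> delta / card C"
    using divide_right_mono[of "dt * mY ?U" delta "real (card C)"] by simp
  then have above: "\<forall>x\<in>C. dt / card C * mY ?U < mY (condY Xs eps C x)"
    using ball_measure_above_threshold[OF C \<open>0 \<le> delta\<close> large] by blast
  show ?thesis
  proof (cases rule: I_delta_cases[OF mY outY_subset above, case_names zero witness])
    case zero
    moreover have "Xs \<noteq> {}" using C unfolding codebook_def by blast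
    ultimately show ?thesis using capacity_nonneg by (simp add: zero_ereal_def)
  next
    case (witness C')
    have "distinguishable mY Xs eps delta C'"
    proof (rule distinguishable_subcodebook[of Xs C])
      fix x1 x2 assume "x1 \<in> C'" "x2 \<in> C'" "x1 \<noteq> x2"
      then show "mY (condY Xs eps C x1 \<inter> condY Xs eps C x2) \<le> delta / card C"
        using witness(4) threshold by (meson order_trans)
    qed (use C witness(1,2) \<open>mY Xs = 1\<close> \<open>0 \<le> delta\<close> in auto)
    then show ?thesis using log_card_le_capacity witness(3) by simp
  qed
qed

lemma distinguishable_feasible:
  assumes mX: "uncertainty_function Xs mX" and mY: "uncertainty_function Xs mY"
    and "mY Xs = 1" and "0 \<le> eps"
    and dist: "distinguishable mY Xs eps delta C"
  shows "feasible mX mY Xs eps (delta / mY (outY Xs eps C)) C"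
proof -
  have C: "codebook Xs C" using dist unfolding distinguishable_def by blast
  then have "C \<subseteq> Xs" "C \<noteq> {}" unfolding codebook_def by auto
  have "preceq_set (assocXY mX Xs eps C) 1"
    unfolding preceq_set_def
  proof
    fix a assume "a \<in> assocXY mX Xs eps C"
    then obtain y1 y2 where a: "a = mX (condX eps C y1 \<inter> condX eps C y2) / mX C"
      unfolding assocXY_def by blast
    have "condX eps C y1 \<inter> condX eps C y2 \<subseteq> C" unfolding condX_def by blast
    then have "mX (condX eps C y1 \<inter> condX eps C y2) \<le> mX C"
      using uncertainty_function_mono[OF mX _ \<open>C \<subseteq> Xs\<close>] by blast
    then show "a \<le> 1" unfolding a
      using uncertainty_function_pos[OF mX \<open>C \<subseteq> Xs\<close> \<open>C \<noteq> {}\<close>] by simp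
  qed
  moreover have "preceq_set (assocYX mY Xs eps C) (delta / mY (outY Xs eps C) / card C)"
    unfolding preceq_set_def
  proof
    fix a assume "a \<in> assocYX mY Xs eps C"
    then obtain x1 x2 where x: "x1 \<in> C" "x2 \<in> C" "x1 \<noteq> x2"
      and a: "a = mY (condY Xs eps C x1 \<inter> condY Xs eps C x2) / mY (outY Xs eps C)"
      unfolding assocYX_def by blast
    have "a = mY (S_eps Xs eps x1 \<inter> S_eps Xs eps x2) / mY (outY Xs eps C)"
      unfolding a using x by (simp add: condY_eq_S_eps)
    also have "\<dots> \<le> (delta / card C) / mY (outY Xs eps C)"
    proof (rule divide_right_mono)
      show "mY (S_eps Xs eps x1 \<inter> S_eps Xs eps x2) \<le> delta / card C"
        using dist x \<open>mY Xs = 1\<close> unfolding distinguishable_def by fastforce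
    qed (use outY_pos[OF mY C \<open>0 \<le> eps\<close>] in simp)
    also have "\<dots> = delta / mY (outY Xs eps C) / card C"
      by (simp add: mult.commute)
    finally show "a \<le> delta / mY (outY Xs eps C) / card C" .
  qed
  ultimately show ?thesis unfolding feasible_def using C by blast
qed

lemma distinguishable_I_delta:
  assumes mY: "uncertainty_function Xs mY" and "mY Xs = 1" and "0 \<le> delta" and "0 \<le> eps"
    and large: "\<forall>x\<in>Xs. delta < mY (S_eps Xs eps x)"
    and dist: "distinguishable mY Xs eps delta C"
  shows "I_delta mY (outY Xs eps C) C (condY Xs eps C) (delta / mY (outY Xs eps C) / card C)
    = log 2 (card C)"
proof -
  let ?U = "outY Xs eps C"
  have C: "codebook Xs C" using dist unfolding distinguishable_def by blast
  have threshold: "delta / mY ?U / card C * mY ?U = delta / card C"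
    using outY_pos[OF mY C \<open>0 \<le> eps\<close>] by simp
  show ?thesis
  proof (rule I_delta_conditional_ranges[OF mY outY_subset _ outY_eq_UN_condY])
    show "finite C" using C unfolding codebook_def by blast
  next
    fix x1 x2 assume x: "x1 \<in> C" "x2 \<in> C" "x1 \<noteq> x2"
    then show "mY (condY Xs eps C x1 \<inter> condY Xs eps C x2) \<le> delta / mY ?U / card C * mY ?U"
      using dist \<open>mY Xs = 1\<close> unfolding threshold distinguishable_def
      by (fastforce simp: condY_eq_S_eps)
  next
    show "\<forall>x\<in>C. delta / mY ?U / card C * mY ?U < mY (condY Xs eps C x)"
      unfolding threshold using ball_measure_above_threshold[OF C \<open>0 \<le> delta\<close> large] by blast
  qed
qed

theorem theorem4:
  fixes Xs :: "'a::real_normed_vector set"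
    and mX mY :: "'a set \<Rightarrow> real"
    and eps delta :: real
    and xstar :: 'a
  assumes "totally_bounded Xs"
    and "\<forall>x\<in>Xs. norm x \<le> 1"
    and "uncertainty_function Xs mX"
    and "uncertainty_function Xs mY"
    and "mY Xs = 1"
    and "0 < eps" and "eps \<le> 1"
    and "xstar \<in> Xs"
    and "\<forall>x\<in>Xs. mY (S_eps Xs eps xstar) \<le> mY (S_eps Xs eps x)"
    and "0 \<le> delta" and "delta < mY (S_eps Xs eps xstar)"
  shows "capacity mY Xs eps delta =
    Sup {ereal (I_delta mY (outY Xs eps C) C (condY Xs eps C) (dt / real (card C))) | dt C.
           0 \<le> dt \<and> feasible mX mY Xs eps dt C \<and> dt \<le> delta / mY (outY Xs eps C)}"
    (is "_ = Sup ?R")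
proof (rule antisym)
  have large: "\<forall>x\<in>Xs. delta < mY (S_eps Xs eps x)"
    using assms(9,11) by fastforce
  have "0 \<le> eps" using \<open>0 < eps\<close> by simp
  show "capacity mY Xs eps delta \<le> Sup ?R"
    unfolding capacity_def
  proof (rule Sup_least, clarify)
    fix C assume dist: "distinguishable mY Xs eps delta C"
    then have "0 < mY (outY Xs eps C)"
      using outY_pos[OF assms(4) _ \<open>0 \<le> eps\<close>] unfolding distinguishable_def by blast
    with dist have "ereal (log 2 (card C)) \<in> ?R"
      using distinguishable_feasible[OF assms(3-5) \<open>0 \<le> eps\<close> dist]
        distinguishable_I_delta[OF assms(4,5,10) \<open>0 \<le> eps\<close> large dist] \<open>0 \<le> delta\<close>
      by (intro CollectI exI[of _ "delta / mY (outY Xs eps C)"] exI[of _ C]) simp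
    then show "ereal (log 2 (card C)) \<le> Sup ?R" by (rule Sup_upper)
  qed
  show "Sup ?R \<le> capacity mY Xs eps delta"
    using I_delta_le_capacity[OF assms(4,5,10) \<open>0 \<le> eps\<close> large]
    by (intro Sup_least) (auto simp: feasible_def)
qed

end
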